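(* Let $X$ be a topological space in which every open set is a union of countably many clopen sets. The following are equivalent: (1) $X$ is a $\overline{\mathrm{QN}}$ space; (2) $X$ is a QN space; (3) every sequence of Borel real-valued functions on $X$ converging pointwise to $0$ converges to $0$ quasi-normally; (4) every sequence of Borel real-valued functions on $X$ converging pointwise to a function $f$ converges quasi-normally to $f$.
   Context: Functions $f_n:X\to\mathbb{R}$ converge quasi-normally to $f$ if there are positive reals $\epsilon_n\to0$ such that for each $x\in X$, $|f_n(x)-f(x)|<\epsilon_n$ for all but finitely many $n$. $X$ is a QN space if every sequence of continuous real-valued functions on $X$ converging pointwise to $0$ converges to $0$ quasi-normally. $X$ is a $\overline{\mathrm{QN}}$ space if whenever a sequence of continuous real-valued functions on $X$ converges pointwise to a function $f:X\to\mathbb{R}$ (not assumed continuous), it converges to $f$ quasi-normally. *)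

theory Defs
  imports "HOL-Analysis.Analysis"
begin

definition qn_converges :: "'a topology \<Rightarrow> (nat \<Rightarrow> 'a \<Rightarrow> real) \<Rightarrow> ('a \<Rightarrow> real) \<Rightarrow> bool" where
  "qn_converges X f g \<longleftrightarrow>
     (\<exists>\<epsilon>::nat \<Rightarrow> real. (\<forall>n. \<epsilon> n > 0) \<and> \<epsilon> \<longlonglongrightarrow> 0 \<and>
        (\<forall>x\<in>topspace X. eventually (\<lambda>n. \<bar>f n x - g x\<bar> < \<epsilon> n) sequentially))"

definition pointwise_converges :: "'a topology \<Rightarrow> (nat \<Rightarrow> 'a \<Rightarrow> real) \<Rightarrow> ('a \<Rightarrow> real) \<Rightarrow> bool" where
  "pointwise_converges X f g \<longleftrightarrow> (\<forall>x\<in>topspace X. (\<lambda>n. f n x) \<longlonglongrightarrow> g x)"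

definition QN_space :: "'a topology \<Rightarrow> bool" where
  "QN_space X \<longleftrightarrow> (\<forall>f. (\<forall>n. continuous_map X euclideanreal (f n)) \<longrightarrow>
      pointwise_converges X f (\<lambda>x. 0) \<longrightarrow> qn_converges X f (\<lambda>x. 0))"

definition QN_bar_space :: "'a topology \<Rightarrow> bool" where
  "QN_bar_space X \<longleftrightarrow> (\<forall>f g. (\<forall>n. continuous_map X euclideanreal (f n)) \<longrightarrow>
      pointwise_converges X f g \<longrightarrow> qn_converges X f g)"

definition borel_of :: "'a topology \<Rightarrow> 'a measure" where
  "borel_of X = sigma (topspace X) {U. openin X U}"

definition borel_fun :: "'a topology \<Rightarrow> ('a \<Rightarrow> real) \<Rightarrow> bool" where
  "borel_fun X h \<longleftrightarrow> h \<in> borel_measurable (borel_of X)"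

end

theory Submission
  imports Defs
begin

(* The heart of the proof is a selection principle for QN spaces (QN_closed_selection): given
   closed sets A k m such that every point lies in A k m for almost all m, one can choose one
   index mm k per level k so that every point lies in A k (mm k) for almost all k.  It is obtained
   by feeding the QN property the continuous functions 2^-k * indicator(C), C running through clopen
   pieces of the complements of the A k m.  Applied to the "Cauchy bands" of a pointwise
   convergent sequence of continuous functions, it yields a diagonal selection
   (QN_diagonal_selection), from which QN implies QN-bar follows.

   For the Borel statements, let baire1 X be the class of pointwise limits of continuous functions.
   Using the diagonal selection once more, in a QN space baire1 X is closed under pointwise limits
   and such limits are quasi-normal (baire1_limit).  Open, hence all Borel, indicators are in
   baire1 X, so every Borel function is; the main theorem then follows. *)

definition open_clopen_sigma :: "'a topology \<Rightarrow> bool" where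
  "open_clopen_sigma X \<longleftrightarrow> (\<forall>U. openin X U \<longrightarrow>
     (\<exists>\<C>. countable \<C> \<and> (\<forall>C\<in>\<C>. openin X C \<and> closedin X C) \<and> \<Union>\<C> = U))"

lemma clopen_disjoint_decomposition:
  assumes "open_clopen_sigma X" "openin X U"
  shows "\<exists>L :: nat \<Rightarrow> 'a set. (\<forall>j. openin X (L j) \<and> closedin X (L j)) \<and> disjoint_family L
           \<and> (\<Union>j. L j) = U"
proof -
  obtain \<C> where C: "countable \<C>" "\<forall>C\<in>\<C>. openin X C \<and> closedin X C" "\<Union>\<C> = U"
    using assms unfolding open_clopen_sigma_def by blast
  show ?thesis
  proof (cases "\<C> = {}")
    case True
    then show ?thesis using C by (intro exI[of _ "\<lambda>_. {}"]) (auto simp: disjoint_family_on_def)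
  next
    case False
    define c where "c = from_nat_into \<C>"
    have range_c: "range c = \<C>" using False C(1) by (simp add: c_def)
    have clopen_c: "openin X (c j) \<and> closedin X (c j)" for j using range_c C(2) by auto
    have "openin X (disjointed c j) \<and> closedin X (disjointed c j)" for j
    proof -
      have "closedin X (\<Union>(c ` {0..<j}))" using clopen_c by (intro closedin_Union) auto
      moreover have "openin X (\<Union>(c ` {0..<j}))" using clopen_c by (intro openin_Union) auto
      ultimately show ?thesis using clopen_c[of j] unfolding disjointed_def by auto
    qed
    moreover have "(\<Union>j. disjointed c j) = U" using UN_disjointed_eq[of c] range_c C(3) by simp
    ultimately show ?thesis using disjoint_family_disjointed[of c] by blast
  qed
qed

lemma continuous_map_clopen_indicator:
  assumes "openin X S" "closedin X S"
  shows "continuous_map X euclideanreal (\<lambda>x. c * indicator S x)"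
proof -
  have "openin X {x \<in> topspace X. c * indicator S x \<in> V}" for V :: "real set"
  proof -
    have "{x \<in> topspace X. c * indicator S x \<in> V} =
       (if c \<in> V then S else {}) \<union> (if 0 \<in> V then topspace X - S else {})"
      using openin_subset[OF assms(1)] by (auto simp: indicator_def)
    then show ?thesis using assms by auto
  qed
  then show ?thesis by (auto simp: continuous_map_def)
qed

section \<open>The selection principle of QN spaces\<close>

lemma eventually_sequentially_iff_finite: "eventually P sequentially \<longleftrightarrow> finite {n. \<not> P n}"
  by (simp add: cofinite_eq_sequentially[symmetric] eventually_cofinite)

lemma tendsto_zero_injective_enumeration:
  fixes t :: "'i \<Rightarrow> real" and d :: "nat \<Rightarrow> 'i"
  assumes "inj d" and "\<And>e. e > 0 \<Longrightarrow> finite {i. e \<le> \<bar>t i\<bar>}"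
  shows "(\<lambda>n. t (d n)) \<longlonglongrightarrow> 0"
proof (rule tendstoI)
  fix e :: real assume "e > 0"
  then have "finite (d -` {i. e \<le> \<bar>t i\<bar>})" using assms by (intro finite_vimageI) auto
  then have "eventually (\<lambda>n. \<not> e \<le> \<bar>t (d n)\<bar>) sequentially"
    by (simp add: eventually_sequentially_iff_finite vimage_def)
  then show "eventually (\<lambda>n. dist (t (d n)) 0 < e) sequentially" by eventually_elim simp
qed

lemma finite_indices_disjoint_family:
  assumes "disjoint_family L"
  shows "finite {j. x \<in> L j}"
proof (cases "\<exists>j. x \<in> L j")
  case True
  then obtain j0 where "x \<in> L j0" by blast
  then have "{j. x \<in> L j} \<subseteq> {j0}"
    using assms by (auto simp: disjoint_family_on_def)
  then show ?thesis using finite_subset by blast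
qed simp

definition triple_decode :: "nat \<Rightarrow> nat \<times> nat \<times> nat" where
  "triple_decode n = map_prod id prod_decode (prod_decode n)"

definition triple_encode :: "nat \<Rightarrow> nat \<Rightarrow> nat \<Rightarrow> nat" where
  "triple_encode k m j = prod_encode (k, prod_encode (m, j))"

lemma triple_decode_encode [simp]: "triple_decode (triple_encode k m j) = (k, m, j)"
  by (simp add: triple_decode_def triple_encode_def)

lemma inj_triple_decode: "inj triple_decode"
  using inj_compose[OF prod.inj_map[OF inj_on_id inj_prod_decode] inj_prod_decode]
  by (simp add: o_def triple_decode_def[abs_def])

lemma triple_encode_ge: "m \<le> triple_encode k m j"
  unfolding triple_encode_def using le_prod_encode_1 le_prod_encode_2 order_trans by blast

text \<open>The test functions of the selection principle: 2^-k * indicator (L k m j), listed along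
  an injective enumeration d of nat \<times> nat \<times> nat.  They tend to 0 at every point x which meets
  each family L k m at most once and the families L k m for finitely many m only: for a given
  level 2^-K, only finitely many of them are that large at x.\<close>
lemma clopen_test_functions_tendsto_zero:
  fixes L :: "nat \<Rightarrow> nat \<Rightarrow> nat \<Rightarrow> 'a set" and d :: "nat \<Rightarrow> nat \<times> nat \<times> nat"
  assumes "inj d"
    and disj: "\<And>k m. disjoint_family (L k m)"
    and fin: "\<And>k. finite {m. \<exists>j. x \<in> L k m j}"
  shows "(\<lambda>n. case d n of (k, m, j) \<Rightarrow> (1/2::real)^k * indicator (L k m j) x) \<longlonglongrightarrow> 0"
proof (rule tendsto_zero_injective_enumeration[OF \<open>inj d\<close>])
  define t :: "nat \<times> nat \<times> nat \<Rightarrow> real" where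
    "t = (\<lambda>(k, m, j). (1/2)^k * indicator (L k m j) x)"
  fix e :: real assume "e > 0"
  obtain K where K: "(1/2::real)^K < e" using real_arch_pow_inv[OF \<open>e > 0\<close>, of "1/2"] by auto
  define S where "S = Sigma {..K} (\<lambda>k. Sigma {m. \<exists>j. x \<in> L k m j} (\<lambda>m. {j. x \<in> L k m j}))"
  have "{i. e \<le> \<bar>t i\<bar>} \<subseteq> S"
  proof
    fix i assume "i \<in> {i. e \<le> \<bar>t i\<bar>}"
    moreover obtain k m j where i: "i = (k, m, j)" by (cases i)
    ultimately have large: "e \<le> \<bar>t (k, m, j)\<bar>" by simp
    then have "x \<in> L k m j" using \<open>e > 0\<close> by (cases "x \<in> L k m j") (auto simp: t_def)
    with large have "e \<le> (1/2::real)^k" by (simp add: t_def)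
    then have "(1/2::real)^K < (1/2)^k" using K by linarith
    then have "k \<le> K" by simp
    with \<open>x \<in> L k m j\<close> i show "i \<in> S" by (auto simp: S_def)
  qed
  moreover have "finite S"
    unfolding S_def using fin finite_indices_disjoint_family[OF disj] by (intro finite_SigmaI) auto
  ultimately show "finite {i. e \<le> \<bar>(\<lambda>(k, m, j). (1/2::real)^k * indicator (L k m j) x) i\<bar>}"
    unfolding t_def by (rule finite_subset)
qed

text \<open>The QN property, applied
  to the test functions above, yields a control sequence \<delta>; choosing mm k so large that
  \<delta> stays below 2^-k from mm k on, a point met by L k (mm k) gives a test function of value
  2^-k \<ge> \<delta> beyond mm k, which happens for finitely many k only.\<close>
lemma QN_clopen_selection:
  fixes L :: "nat \<Rightarrow> nat \<Rightarrow> nat \<Rightarrow> 'a set"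
  assumes qn: "QN_space X"
    and clopen: "\<And>k m j. openin X (L k m j) \<and> closedin X (L k m j)"
    and disj: "\<And>k m. disjoint_family (L k m)"
    and fin: "\<And>k x. x \<in> topspace X \<Longrightarrow> finite {m. \<exists>j. x \<in> L k m j}"
  shows "\<exists>mm. \<forall>x\<in>topspace X. eventually (\<lambda>k. \<forall>j. x \<notin> L k (mm k) j) sequentially"
proof -
  define T :: "nat \<times> nat \<times> nat \<Rightarrow> 'a \<Rightarrow> real"
    where "T = (\<lambda>(k, m, j) x. (1/2)^k * indicator (L k m j) x)"
  have cont: "continuous_map X euclideanreal (T (triple_decode n))" for n
    using clopen by (cases "triple_decode n") (auto simp: T_def intro!: continuous_map_clopen_indicator)
  have conv: "pointwise_converges X (\<lambda>n. T (triple_decode n)) (\<lambda>x. 0)"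
    using clopen_test_functions_tendsto_zero[OF inj_triple_decode disj fin]
    by (auto simp: pointwise_converges_def T_def case_prod_unfold)
  have "qn_converges X (\<lambda>n. T (triple_decode n)) (\<lambda>x. 0)"
    by (rule qn[unfolded QN_space_def, rule_format]) (use cont conv in auto)
  then obtain \<delta> where \<delta>: "\<delta> \<longlonglongrightarrow> 0" "\<forall>x\<in>topspace X. \<forall>\<^sub>F n in sequentially. \<bar>T (triple_decode n) x - 0\<bar> < \<delta> n"
    unfolding qn_converges_def by blast
  have "\<forall>k. \<exists>N. \<forall>n\<ge>N. \<delta> n < (1/2)^k"
    using order_tendstoD(2)[OF \<delta>(1)] by (simp add: eventually_sequentially)
  then obtain mm where mm: "\<And>k n. n \<ge> mm k \<Longrightarrow> \<delta> n < (1/2)^k" by metis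
  show ?thesis
  proof (intro exI ballI)
    fix x assume x: "x \<in> topspace X"
    define bad where "bad = {n. \<not> \<bar>T (triple_decode n) x - 0\<bar> < \<delta> n}"
    have "finite bad"
      using \<delta>(2) x by (simp add: bad_def eventually_sequentially_iff_finite)
    have "{k. \<exists>j. x \<in> L k (mm k) j} \<subseteq> (\<lambda>n. fst (triple_decode n)) ` bad"
    proof clarify
      fix k j assume j: "x \<in> L k (mm k) j"
      have "\<delta> (triple_encode k (mm k) j) < (1/2)^k" by (rule mm[OF triple_encode_ge])
      then have "triple_encode k (mm k) j \<in> bad" using j by (simp add: bad_def T_def)
      then show "k \<in> (\<lambda>n. fst (triple_decode n)) ` bad" by (rule rev_image_eqI) simp
    qed
    then have "finite {k. \<exists>j. x \<in> L k (mm k) j}"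
      using \<open>finite bad\<close> finite_surj by blast
    then show "eventually (\<lambda>k. \<forall>j. x \<notin> L k (mm k) j) sequentially"
      by (simp add: eventually_sequentially_iff_finite)
  qed
qed

text \<open>The selection principle for closed sets A k m exhausting the space as m grows: the
  complements of the A k m are split into clopen pieces and the clopen form is applied.\<close>
lemma QN_closed_selection:
  fixes A :: "nat \<Rightarrow> nat \<Rightarrow> 'a set"
  assumes hyp: "open_clopen_sigma X" and qn: "QN_space X"
    and closed: "\<And>k m. closedin X (A k m)"
    and cover: "\<And>k x. x \<in> topspace X \<Longrightarrow> eventually (\<lambda>m. x \<in> A k m) sequentially"
  shows "\<exists>mm. \<forall>x\<in>topspace X. eventually (\<lambda>k. x \<in> A k (mm k)) sequentially"
proof -
  have decomp: "\<exists>L::nat \<Rightarrow> 'a set. (\<forall>j. openin X (L j) \<and> closedin X (L j)) \<and> disjoint_family L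
      \<and> (\<Union>j. L j) = topspace X - A k m" for k m
  proof -
    have "openin X (topspace X - A k m)" using closed by (simp add: closedin_def)
    then show ?thesis by (rule clopen_disjoint_decomposition[OF hyp])
  qed
  define L :: "nat \<Rightarrow> nat \<Rightarrow> nat \<Rightarrow> 'a set"
    where "L k m = (SOME L. (\<forall>j. openin X (L j) \<and> closedin X (L j)) \<and> disjoint_family L
      \<and> (\<Union>j. L j) = topspace X - A k m)" for k m
  have "(\<forall>j. openin X (L k m j) \<and> closedin X (L k m j)) \<and> disjoint_family (L k m)
      \<and> (\<Union>j. L k m j) = topspace X - A k m" for k m
    unfolding L_def by (rule someI_ex[OF decomp])
  then have L: "\<And>k m j. openin X (L k m j) \<and> closedin X (L k m j)" "\<And>k m. disjoint_family (L k m)"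
       "\<And>k m. (\<Union>j. L k m j) = topspace X - A k m"
    by simp_all
  have meets_L: "(\<exists>j. x \<in> L k m j) \<longleftrightarrow> x \<notin> A k m" if "x \<in> topspace X" for x k m
    using L(3)[of k m] that by blast
  have "finite {m. \<exists>j. x \<in> L k m j}" if x: "x \<in> topspace X" for k x
    using cover[OF x, of k] meets_L[OF x]
    by (simp add: eventually_sequentially_iff_finite)
  then have "\<exists>mm. \<forall>x\<in>topspace X. eventually (\<lambda>k. \<forall>j. x \<notin> L k (mm k) j) sequentially"
    by (intro QN_clopen_selection[OF qn] L)
  then obtain mm where mm: "\<forall>x\<in>topspace X. eventually (\<lambda>k. \<forall>j. x \<notin> L k (mm k) j) sequentially" ..
  show ?thesis
  proof (intro exI ballI)
    fix x assume x: "x \<in> topspace X"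
    from mm[rule_format, OF x] show "eventually (\<lambda>k. x \<in> A k (mm k)) sequentially"
      by (rule eventually_mono) (use meets_L[OF x] in blast)
  qed
qed

section \<open>From QN to QN-bar\<close>

definition cauchy_band :: "'a topology \<Rightarrow> (nat \<Rightarrow> 'a \<Rightarrow> real) \<Rightarrow> real \<Rightarrow> nat \<Rightarrow> 'a set" where
  "cauchy_band X f c m = {x\<in>topspace X. \<forall>p\<ge>m. \<forall>q\<ge>m. \<bar>f p x - f q x\<bar> \<le> c}"

lemma closedin_cauchy_band:
  assumes "\<And>n. continuous_map X euclideanreal (f n)"
  shows "closedin X (cauchy_band X f c m)"
proof -
  have band: "cauchy_band X f c m =
     topspace X \<inter> (\<Inter>(p, q)\<in>{m..} \<times> {m..}. {x\<in>topspace X. \<bar>f p x - f q x\<bar> \<in> {..c}})"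
    by (auto simp: cauchy_band_def)
  have "closedin X {x\<in>topspace X. \<bar>f p x - f q x\<bar> \<in> {..c}}" for p q
    by (rule closedin_continuous_map_preimage[where Y=euclideanreal])
       (auto intro!: continuous_map_real_abs continuous_map_diff assms)
  then show ?thesis
    unfolding band by (intro closedin_Int closedin_topspace closedin_Inter) auto
qed

lemma eventually_in_cauchy_band:
  assumes "(\<lambda>n. f n x) \<longlonglongrightarrow> L" "c > 0" "x \<in> topspace X"
  shows "eventually (\<lambda>m. x \<in> cauchy_band X f c m) sequentially"
proof -
  obtain M where M: "\<forall>p\<ge>M. \<forall>q\<ge>M. norm (f p x - f q x) < c"
    using CauchyD[OF LIMSEQ_imp_Cauchy[OF assms(1)] assms(2)] by blast
  then have "\<bar>f p x - f q x\<bar> \<le> c" if "p \<ge> M" "q \<ge> M" for p q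
    using that by (fastforce intro: less_imp_le)
  then have "\<forall>m\<ge>M. x \<in> cauchy_band X f c m"
    using assms(3) by (auto simp: cauchy_band_def)
  then show ?thesis unfolding eventually_sequentially by blast
qed

lemma cauchy_band_limit_bound:
  assumes "(\<lambda>n. f n x) \<longlonglongrightarrow> L" "x \<in> cauchy_band X f c m" "n \<ge> m"
  shows "\<bar>f n x - L\<bar> \<le> c"
proof -
  have "(\<lambda>q. \<bar>f n x - f q x\<bar>) \<longlonglongrightarrow> \<bar>f n x - L\<bar>"
    by (intro tendsto_rabs tendsto_diff tendsto_const assms(1))
  moreover have "\<forall>q\<ge>m. \<bar>f n x - f q x\<bar> \<le> c" using assms(2,3) by (auto simp: cauchy_band_def)
  ultimately show ?thesis by (intro LIMSEQ_le_const2) auto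
qed

lemma QN_diagonal_selection:
  fixes g :: "nat \<Rightarrow> nat \<Rightarrow> 'a \<Rightarrow> real"
  assumes hyp: "open_clopen_sigma X" and qn: "QN_space X"
    and cont: "\<And>k j. continuous_map X euclideanreal (g k j)"
    and lim: "\<And>k x. x \<in> topspace X \<Longrightarrow> (\<lambda>j. g k j x) \<longlonglongrightarrow> F k x"
  shows "\<exists>mm. \<forall>x\<in>topspace X.
           eventually (\<lambda>k. \<forall>j\<ge>mm k. \<bar>g k j x - F k x\<bar> \<le> (1/2)^k) sequentially"
proof -
  define A where "A k = cauchy_band X (g k) ((1/2)^k)" for k
  have "\<exists>mm. \<forall>x\<in>topspace X. eventually (\<lambda>k. x \<in> A k (mm k)) sequentially"
    unfolding A_def
    by (rule QN_closed_selection[OF hyp qn closedin_cauchy_band[OF cont]]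
          eventually_in_cauchy_band[OF lim])+ auto
  then obtain mm where mm: "\<forall>x\<in>topspace X. eventually (\<lambda>k. x \<in> A k (mm k)) sequentially" ..
  have "eventually (\<lambda>k. \<forall>j\<ge>mm k. \<bar>g k j x - F k x\<bar> \<le> (1/2)^k) sequentially"
    if x: "x \<in> topspace X" for x
    using mm[rule_format, OF x]
  proof eventually_elim
    case (elim k)
    then show ?case
      using cauchy_band_limit_bound[of "g k" x "F k x"] lim[OF x, of k] by (auto simp: A_def)
  qed
  then show ?thesis by blast
qed

lemma slow_level_function:
  fixes mm :: "nat \<Rightarrow> nat"
  obtains K :: "nat \<Rightarrow> nat" where "\<And>k0. eventually (\<lambda>n. k0 \<le> K n \<and> mm (K n) \<le> n) sequentially"
proof -
  define M where "M k = k + (\<Sum>i\<le>k. mm i)" for k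
  have M_ge: "mm k \<le> M k" "k \<le> M k" for k
    unfolding M_def by (auto intro!: member_le_sum trans_le_add2)
  define K where "K n = Max (insert 0 {k. k \<le> n \<and> M k \<le> n})" for n
  have K_fin: "finite (insert 0 {k. k \<le> n \<and> M k \<le> n})" for n
    by (rule finite_subset[of _ "{..n}"]) auto
  have K_ge: "k \<le> K n" if "M k \<le> n" for k n
    unfolding K_def using that M_ge(2)[of k] K_fin[of n] by (intro Max_ge) auto
  have K_cases: "K n = 0 \<or> M (K n) \<le> n" for n
    using Max_in[OF K_fin[of n]] unfolding K_def by auto
  have "k0 \<le> K n \<and> mm (K n) \<le> n" if n: "M k0 \<le> n" for k0 n
  proof -
    have "k0 \<le> K n" using K_ge[OF n] .
    moreover have "M (K n) \<le> n"
      using K_cases[of n] \<open>k0 \<le> K n\<close> n by auto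
    ultimately show ?thesis using M_ge(1)[of "K n"] by linarith
  qed
  then show ?thesis using that unfolding eventually_sequentially by blast
qed

text \<open>A diagonal selection as above yields quasi-normal convergence, with control
  2 * 2^-(K n) for a slow level function K.\<close>
lemma qn_converges_from_selection:
  assumes "\<And>x. x \<in> topspace X \<Longrightarrow>
             eventually (\<lambda>k. \<forall>n\<ge>mm k. \<bar>f n x - g x\<bar> \<le> (1/2::real)^k) sequentially"
  shows "qn_converges X f g"
proof -
  obtain K where K: "\<And>k0. eventually (\<lambda>n. k0 \<le> K n \<and> mm (K n) \<le> n) sequentially"
    using slow_level_function by blast
  define \<epsilon> where "\<epsilon> n = 2 * (1/2::real)^(K n)" for n
  have "eventually (\<lambda>n. k0 \<le> K n) sequentially" for k0
    using K[of k0] by (rule eventually_mono) simp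
  then have "filterlim K at_top sequentially" by (simp add: filterlim_at_top)
  then have "(\<lambda>n. (1/2::real)^(K n)) \<longlonglongrightarrow> 0"
    using filterlim_compose[OF LIMSEQ_realpow_zero[of "1/2::real"]] by auto
  then have "\<epsilon> \<longlonglongrightarrow> 0" unfolding \<epsilon>_def using tendsto_mult_right_zero by blast
  moreover have "eventually (\<lambda>n. \<bar>f n x - g x\<bar> < \<epsilon> n) sequentially" if x: "x \<in> topspace X" for x
  proof -
    obtain k0 where k0: "\<And>k. k \<ge> k0 \<Longrightarrow> \<forall>n\<ge>mm k. \<bar>f n x - g x\<bar> \<le> (1/2::real)^k"
      using assms[OF x] unfolding eventually_sequentially by blast
    from K[of k0] show ?thesis
    proof eventually_elim
      case (elim n)
      then have "\<bar>f n x - g x\<bar> \<le> (1/2)^(K n)" using k0 by blast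
      also have "\<dots> < \<epsilon> n" unfolding \<epsilon>_def by simp
      finally show ?case .
    qed
  qed
  ultimately show ?thesis unfolding qn_converges_def by (intro exI[of _ \<epsilon>]) (auto simp: \<epsilon>_def)
qed

text \<open>QN implies QN-bar: apply the diagonal selection to the constant double sequence f.\<close>
lemma QN_imp_QN_bar:
  assumes hyp: "open_clopen_sigma X" and qn: "QN_space X"
  shows "QN_bar_space X"
  unfolding QN_bar_space_def
proof (intro allI impI)
  fix f :: "nat \<Rightarrow> 'a \<Rightarrow> real" and g
  assume "\<forall>n. continuous_map X euclideanreal (f n)" and "pointwise_converges X f g"
  then obtain mm where "\<forall>x\<in>topspace X.
      eventually (\<lambda>k. \<forall>n\<ge>mm k. \<bar>f n x - g x\<bar> \<le> (1/2)^k) sequentially"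
    using QN_diagonal_selection[OF hyp qn, of "\<lambda>k. f" "\<lambda>k. g"]
    unfolding pointwise_converges_def by blast
  then show "qn_converges X f g" by (intro qn_converges_from_selection[where mm=mm]) blast
qed

section \<open>Pointwise limits of continuous functions\<close>

definition baire1 :: "'a topology \<Rightarrow> ('a \<Rightarrow> real) \<Rightarrow> bool" where
  "baire1 X f \<longleftrightarrow> (\<exists>g::nat \<Rightarrow> 'a \<Rightarrow> real. (\<forall>j. continuous_map X euclideanreal (g j)) \<and>
      (\<forall>x\<in>topspace X. (\<lambda>j. g j x) \<longlonglongrightarrow> f x))"

lemma baire1_continuous: "continuous_map X euclideanreal f \<Longrightarrow> baire1 X f"
  unfolding baire1_def by (rule exI[of _ "\<lambda>j. f"]) auto

lemma baire1_cong: "baire1 X f \<Longrightarrow> (\<And>x. x \<in> topspace X \<Longrightarrow> f x = f' x) \<Longrightarrow> baire1 X f'"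
  unfolding baire1_def by metis

lemma baire1_binop:
  fixes \<phi> :: "real \<Rightarrow> real \<Rightarrow> real"
  assumes \<phi>: "continuous_on UNIV (\<lambda>p. \<phi> (fst p) (snd p))"
    and "baire1 X f" "baire1 X h"
  shows "baire1 X (\<lambda>x. \<phi> (f x) (h x))"
proof -
  obtain a b :: "nat \<Rightarrow> 'a \<Rightarrow> real" where
    a: "\<And>j. continuous_map X euclideanreal (a j)" "\<And>x. x \<in> topspace X \<Longrightarrow> (\<lambda>j. a j x) \<longlonglongrightarrow> f x" and
    b: "\<And>j. continuous_map X euclideanreal (b j)" "\<And>x. x \<in> topspace X \<Longrightarrow> (\<lambda>j. b j x) \<longlonglongrightarrow> h x"
    using assms(2,3) unfolding baire1_def by metis
  have "continuous_map X euclideanreal (\<lambda>x. \<phi> (a j x) (b j x))" for j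
  proof -
    have "continuous_map X euclidean (\<lambda>x. (a j x, b j x))"
      using a(1) b(1) by (simp only: prod_topology_euclidean[symmetric] continuous_map_paired)
    from continuous_map_compose[OF this \<phi>[folded continuous_map_iff_continuous2]]
    show ?thesis by (simp add: o_def)
  qed
  moreover have "(\<lambda>j. \<phi> (a j x) (b j x)) \<longlonglongrightarrow> \<phi> (f x) (h x)" if "x \<in> topspace X" for x
    using continuous_on_tendsto_compose[OF \<phi> tendsto_Pair[OF a(2) b(2)]] that by simp
  ultimately show ?thesis
    unfolding baire1_def by (intro exI[of _ "\<lambda>j x. \<phi> (a j x) (b j x)"]) blast
qed

lemma baire1_add:
  assumes "baire1 X f" "baire1 X h"
  shows "baire1 X (\<lambda>x. f x + h x)"
  by (rule baire1_binop[where \<phi>="(+)", OF _ assms]) (intro continuous_intros)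

lemma baire1_diff:
  assumes "baire1 X f" "baire1 X h"
  shows "baire1 X (\<lambda>x. f x - h x)"
  by (rule baire1_binop[where \<phi>="(-)", OF _ assms]) (intro continuous_intros)

lemma baire1_max:
  assumes "baire1 X f" "baire1 X h"
  shows "baire1 X (\<lambda>x. max (f x) (h x))"
  by (rule baire1_binop[where \<phi>=max, OF _ assms]) (intro continuous_intros)

lemma baire1_cmult:
  assumes "baire1 X f"
  shows "baire1 X (\<lambda>x. c * f x)"
proof -
  have "baire1 X (\<lambda>x. (\<lambda>u v. c * u) (f x) (f x))"
    by (rule baire1_binop[OF _ assms assms]) (intro continuous_intros)
  then show ?thesis by simp
qed

text \<open>Quasi-normal convergence survives perturbations that are eventually below 2^-n at each
  point: add 2^-n to the control sequence.\<close>
lemma qn_converges_perturb: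
  assumes "qn_converges X G h"
    and close: "\<And>x. x \<in> topspace X \<Longrightarrow>
                 eventually (\<lambda>n. \<bar>G n x - F n x\<bar> \<le> (1/2::real)^n) sequentially"
  shows "qn_converges X F h"
proof -
  obtain \<epsilon> where \<epsilon>: "\<forall>n. \<epsilon> n > 0" "\<epsilon> \<longlonglongrightarrow> 0"
      "\<forall>x\<in>topspace X. \<forall>\<^sub>F n in sequentially. \<bar>G n x - h x\<bar> < \<epsilon> n"
    using assms(1) unfolding qn_converges_def by blast
  show ?thesis
    unfolding qn_converges_def
  proof (intro exI[of _ "\<lambda>n. \<epsilon> n + (1/2)^n"] conjI allI ballI)
    show "\<epsilon> n + (1/2::real)^n > 0" for n using \<epsilon>(1) by (simp add: add_pos_pos)
    show "(\<lambda>n. \<epsilon> n + (1/2::real)^n) \<longlonglongrightarrow> 0"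
      using tendsto_add[OF \<epsilon>(2) LIMSEQ_realpow_zero[of "1/2::real"]] by simp
    fix x assume x: "x \<in> topspace X"
    from \<epsilon>(3)[rule_format, OF x] close[OF x]
    show "\<forall>\<^sub>F n in sequentially. \<bar>F n x - h x\<bar> < \<epsilon> n + (1/2)^n"
      by eventually_elim linarith
  qed
qed

text \<open>Each F n is approximated within
  2^-n by a continuous G n (diagonal selection); G converges to the same limit, quasi-normally
  by QN-bar, and the errors 2^-n are absorbed by qn_converges_perturb.\<close>
lemma baire1_limit:
  assumes hyp: "open_clopen_sigma X" and qn: "QN_space X"
    and baire1_F: "\<And>n. baire1 X (F n)"
    and lim: "\<And>x. x \<in> topspace X \<Longrightarrow> (\<lambda>n. F n x) \<longlonglongrightarrow> h x"
  shows "baire1 X h \<and> qn_converges X F h"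
proof -
  obtain g :: "nat \<Rightarrow> nat \<Rightarrow> 'a \<Rightarrow> real" where
    g_cont: "\<And>n j. continuous_map X euclideanreal (g n j)" and
    g_lim: "\<And>n x. x \<in> topspace X \<Longrightarrow> (\<lambda>j. g n j x) \<longlonglongrightarrow> F n x"
    using baire1_F unfolding baire1_def by metis
  have "\<exists>mm. \<forall>x\<in>topspace X.
      eventually (\<lambda>n. \<forall>j\<ge>mm n. \<bar>g n j x - F n x\<bar> \<le> (1/2)^n) sequentially"
    by (rule QN_diagonal_selection[OF hyp qn]) (use g_cont g_lim in auto)
  then obtain mm where mm: "\<forall>x\<in>topspace X.
      eventually (\<lambda>n. \<forall>j\<ge>mm n. \<bar>g n j x - F n x\<bar> \<le> (1/2)^n) sequentially" ..
  define G where "G n = g n (mm n)" for n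
  have G_cont: "\<forall>n. continuous_map X euclideanreal (G n)" unfolding G_def using g_cont by blast
  have G_close: "eventually (\<lambda>n. \<bar>G n x - F n x\<bar> \<le> (1/2::real)^n) sequentially"
    if "x \<in> topspace X" for x
    using mm[rule_format, OF that] by eventually_elim (auto simp: G_def)
  have G_lim: "(\<lambda>n. G n x) \<longlonglongrightarrow> h x" if x: "x \<in> topspace X" for x
  proof -
    have "(\<lambda>n. G n x - F n x) \<longlonglongrightarrow> 0"
      by (rule Lim_null_comparison[OF _ LIMSEQ_realpow_zero[of "1/2::real"]])
         (use G_close[OF x] in auto)
    from tendsto_add[OF lim[OF x] this] show ?thesis by simp
  qed
  have "qn_converges X G h"
    using QN_imp_QN_bar[OF hyp qn] G_cont G_lim
    unfolding QN_bar_space_def pointwise_converges_def by blast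
  then have "qn_converges X F h" by (rule qn_converges_perturb) (use G_close in auto)
  moreover have "baire1 X h" unfolding baire1_def using G_cont G_lim by blast
  ultimately show ?thesis by blast
qed

section \<open>Borel functions are of the first Baire class\<close>

lemma space_borel_of: "space (borel_of X) = topspace X"
  unfolding borel_of_def by (rule space_measure_of_conv)

lemma sets_borel_of: "sets (borel_of X) = sigma_sets (topspace X) {U. openin X U}"
  unfolding borel_of_def by (rule sets_measure_of) (blast dest: openin_subset)

lemma continuous_imp_borel_fun:
  assumes "continuous_map X euclideanreal h"
  shows "borel_fun X h"
  unfolding borel_fun_def
proof (rule borel_measurableI)
  fix S :: "real set" assume "open S"
  then have "openin X {x\<in>topspace X. h x \<in> S}"
    by (intro openin_continuous_map_preimage[OF assms]) simp
  moreover have "h -` S \<inter> space (borel_of X) = {x\<in>topspace X. h x \<in> S}"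
    by (auto simp: space_borel_of)
  ultimately show "h -` S \<inter> space (borel_of X) \<in> sets (borel_of X)"
    by (simp add: sets_borel_of)
qed

text \<open>The indicator of an open set U = \<Union>j L j (L j clopen) is the pointwise limit of the
  continuous indicators of the finite unions.\<close>
lemma baire1_indicator_open:
  assumes hyp: "open_clopen_sigma X" and U: "openin X U"
  shows "baire1 X (indicator U)"
proof -
  obtain L :: "nat \<Rightarrow> 'a set" where L: "\<forall>j. openin X (L j) \<and> closedin X (L j)" "(\<Union>j. L j) = U"
    using clopen_disjoint_decomposition[OF hyp U] by blast
  define g :: "nat \<Rightarrow> 'a \<Rightarrow> real" where "g j = indicator (\<Union>i<j. L i)" for j
  have "continuous_map X euclideanreal (g j)" for j
    using continuous_map_clopen_indicator[of X "\<Union>i<j. L i" 1] L(1)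
    by (auto simp: g_def intro: closedin_Union)
  moreover have "(\<lambda>j. g j x) \<longlonglongrightarrow> indicator U x" for x
  proof (cases "x \<in> U")
    case True
    then obtain i0 where "x \<in> L i0" using L(2) by blast
    then have "eventually (\<lambda>j. g j x = indicator U x) sequentially"
      unfolding eventually_sequentially g_def using True
      by (intro exI[of _ "Suc i0"]) (auto simp: indicator_def)
    then show ?thesis by (rule tendsto_eventually)
  next
    case False
    then show ?thesis using L(2) by (auto simp: g_def indicator_def)
  qed
  ultimately show ?thesis unfolding baire1_def by blast
qed

text \<open>Indicators of Borel sets: induction over the generated \<sigma>-algebra; complements by
  subtraction, countable unions as limits of finite unions (baire1_limit).\<close>
lemma baire1_indicator_borel:
  assumes hyp: "open_clopen_sigma X" and qn: "QN_space X" and B: "B \<in> sets (borel_of X)"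
  shows "baire1 X (indicator B)"
  using B unfolding sets_borel_of
proof (induction rule: sigma_sets.induct)
  case (Basic a)
  then show ?case using baire1_indicator_open[OF hyp] by simp
next
  case Empty
  then show ?case by (simp add: baire1_continuous)
next
  case (Compl a)
  have "baire1 X (\<lambda>x. 1 - indicator a x)" by (intro baire1_diff baire1_continuous Compl.IH) simp
  then show ?case by (rule baire1_cong) (auto simp: indicator_def)
next
  case (Union A)
  have finite_unions: "baire1 X (indicator (\<Union>i\<le>n. A i))" for n
  proof (induction n)
    case 0
    then show ?case using Union.IH[of 0] by simp
  next
    case (Suc n)
    have "baire1 X (\<lambda>x. max (indicator (\<Union>i\<le>n. A i) x) (indicator (A (Suc n)) x))"
      by (intro baire1_max Suc.IH Union.IH)
    then show ?case by (rule baire1_cong) (auto simp: indicator_def atMost_Suc)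
  qed
  have lim: "(\<lambda>n. indicator (\<Union>i\<le>n. A i) x) \<longlonglongrightarrow> (indicator (\<Union>i. A i) x :: real)" for x
  proof (cases "x \<in> (\<Union>i. A i)")
    case True
    then obtain i0 where "x \<in> A i0" by blast
    then have "eventually (\<lambda>n. indicator (\<Union>i\<le>n. A i) x = (indicator (\<Union>i. A i) x :: real)) sequentially"
      unfolding eventually_sequentially using True by (intro exI[of _ i0]) (auto simp: indicator_def)
    then show ?thesis by (rule tendsto_eventually)
  next
    case False
    then show ?thesis by (auto simp: indicator_def)
  qed
  then show ?case
    using baire1_limit[OF hyp qn, of "\<lambda>n. indicator (\<Union>i\<le>n. A i)" "indicator (\<Union>i. A i)"]
      finite_unions by blast
qed

text \<open>Every Borel function is of the first Baire class: nonnegative ones by the standard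
  induction (indicators, scaling, sums, increasing limits), the rest by splitting into
  positive and negative parts.\<close>
lemma baire1_borel_fun:
  assumes hyp: "open_clopen_sigma X" and qn: "QN_space X" and u: "borel_fun X u"
  shows "baire1 X u"
proof -
  have baire1_nonneg: "baire1 X v" if "v \<in> borel_measurable (borel_of X)" "\<And>x. 0 \<le> v x" for v
    using that
  proof (induction rule: borel_measurable_induct_real)
    case (set A)
    then show ?case by (rule baire1_indicator_borel[OF hyp qn])
  next
    case (mult u c)
    then show ?case by (blast intro: baire1_cmult)
  next
    case (add u v)
    then show ?case by (blast intro: baire1_add)
  next
    case (seq U)
    then show ?case using baire1_limit[OF hyp qn, of U] by (simp add: space_borel_of)
  qed
  have "baire1 X (\<lambda>x. max (u x) 0 - max (- u x) 0)"
    using u unfolding borel_fun_def by (intro baire1_diff baire1_nonneg) auto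
  then show ?thesis by (rule baire1_cong) auto
qed

theorem mainTheorem11:
  fixes X :: "'a topology"
  assumes "\<forall>U. openin X U \<longrightarrow>
     (\<exists>\<C>. countable \<C> \<and> (\<forall>C\<in>\<C>. openin X C \<and> closedin X C) \<and> \<Union>\<C> = U)"
  shows "(QN_bar_space X \<longleftrightarrow> QN_space X)
    \<and> (QN_space X \<longleftrightarrow>
        (\<forall>f. (\<forall>n. borel_fun X (f n)) \<longrightarrow> pointwise_converges X f (\<lambda>x. 0) \<longrightarrow> qn_converges X f (\<lambda>x. 0)))
    \<and> (QN_space X \<longleftrightarrow>
        (\<forall>f g. (\<forall>n. borel_fun X (f n)) \<longrightarrow> pointwise_converges X f g \<longrightarrow> qn_converges X f g))"
proof -
  have hyp: "open_clopen_sigma X" using assms unfolding open_clopen_sigma_def .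
  have bar_imp_qn: "QN_bar_space X \<Longrightarrow> QN_space X"
    unfolding QN_bar_space_def QN_space_def by blast
  text \<open>(2) implies (4): Borel functions are Baire-1, and Baire-1 limits are quasi-normal.\<close>
  have qn_imp_borel_bar: "qn_converges X f g"
    if "QN_space X" "\<forall>n. borel_fun X (f n)" "pointwise_converges X f g" for f g
    using baire1_limit[OF hyp \<open>QN_space X\<close>, of f g] baire1_borel_fun[OF hyp \<open>QN_space X\<close>] that
    unfolding pointwise_converges_def by blast
  text \<open>(3) implies (2), and a fortiori (4) implies (2): continuous functions are Borel.\<close>
  have borel_qn_imp_qn: "QN_space X"
    if "\<forall>f. (\<forall>n. borel_fun X (f n)) \<longrightarrow> pointwise_converges X f (\<lambda>x. 0) \<longrightarrow> qn_converges X f (\<lambda>x. 0)"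
    using that continuous_imp_borel_fun unfolding QN_space_def by blast
  show ?thesis
    using bar_imp_qn QN_imp_QN_bar[OF hyp] qn_imp_borel_bar borel_qn_imp_qn by blast
qed

end
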